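(* Let $m\ge1$ and let $W$ be a B-DMC. For every $n\ge1$, $$\sum_{\mathbf s\in\mathcal S_n}I(W_{\mathbf s})=\sum_{\mathbf s\in\mathcal S_{n-1}}I(W_{\mathbf s})+\sum_{\mathbf s\in\mathcal S_{n-m}}I(W_{\mathbf s}),$$ with the convention $\mathcal S_k=\{\emptyset\}$ (the empty string) for $k\le0$. Consequently $\frac{1}{N(n)}\sum_{\mathbf s\in\mathcal S_n}I(W_{\mathbf s})=I(W)$ for all $n\ge1$.
   Context: Fix an integer $m\ge1$. Define integers $N(n)$ by $N(n)=1$ for $1-m\le n\le 0$ and $N(n)=N(n-1)+N(n-m)$ for $n\ge1$; write $\mathbb N_n=\{1,\dots,N(n)\}$ (so $\mathbb N_n=\{1\}$ for $n\le 0$, and $\mathbb N_{n-m}\subseteq\mathbb N_{n-1}$). Define vectors $\mathbf s_n^{(i)}\in\{+,-,\bigstar\}^n$ for $n\ge0$, $i\in\mathbb N_n$, recursively: $\mathbf s_0^{(1)}$ is the empty vector, and for $n\ge1$: $\mathbf s_n^{(j)}=(\mathbf s_{n-1}^{(j)},+)$ and $\mathbf s_n^{(j+N(n-1))}=(\mathbf s_{n-1}^{(j)},-)$ for $j\in\mathbb N_{n-m}$, while $\mathbf s_n^{(j)}=(\mathbf s_{n-1}^{(j)},\bigstar)$ for $j\in\mathbb N_{n-1}\setminus\mathbb N_{n-m}$. Let $\mathcal S_n=\{\mathbf s_n^{(i)}:i\in\mathbb N_n\}$ for $n\ge1$. A B-DMC $V$ is a channel with input alphabet $\{0,1\}$,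 a finite output alphabet $\mathcal Y$ and transition probabilities $V(y|x)$. With base-2 logarithms and uniform input: $I(V)=\sum_{y}\sum_{x}\frac12V(y|x)\log\frac{V(y|x)}{\frac12V(y|0)+\frac12V(y|1)}$, $Z(V)=\sum_y\sqrt{V(y|0)V(y|1)}$, $J(V)=\log\frac{2}{1+Z(V)}$. For B-DMCs $V':\{0,1\}\to\mathcal Y_1$ and $V'':\{0,1\}\to\mathcal Y_2$ define $V'\boxminus V'':\{0,1\}\to\mathcal Y_1\times\mathcal Y_2$ by $(V'\boxminus V'')(y_1,y_2|x_1)=\sum_{x_2\in\{0,1\}}\frac12V'(y_1|x_1\oplus x_2)V''(y_2|x_2)$, and $V'\boxplus V'':\{0,1\}\to\mathcal Y_1\times\mathcal Y_2\times\{0,1\}$ by $(V'\boxplus V'')(y_1,y_2,x_1|x_2)=\frac12V'(y_1|x_1\oplus x_2)V''(y_2|x_2)$. Fix a B-DMC $W$. For every finite string $\mathbf t=(t_1,\dots,t_n)\in\{+,-,\bigstar\}^n$, $n\ge0$, define a B-DMC $W_{\mathbf t}$ recursively: $W_{\emptyset}=W$ for the empty string; for $n\ge1$ let $\mathbf t'=(t_1,\dots,t_{n-1})$ and $\mathbf t''=(t_1,\dots,t_{n-m})$ (the empty string if $n\le m$); then $W_{\mathbf t}=W_{\mathbf t''}\boxplus W_{\mathbf t'}$ if $t_n=+$, $W_{\mathbf t}=W_{\mathbf t''}\boxminus W_{\mathbf t'}$ if $t_n=-$, and $W_{\mathbf t}=W_{\mathbf t'}$ if $t_n=\bigstar$.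 *)

theory Defs
  imports Complex_Main
begin

text \<open>Input alphabet {0,1} is modelled by bool (0 = False, 1 = True); xor is (\<noteq>).
  A channel is a pair (Y, V) of an output alphabet Y and transition probabilities V y x = V(y|x).\<close>

datatype 'y outp = Base 'y | Two "'y outp" "'y outp" | Three "'y outp" "'y outp" bool

type_synonym 'y chan = "'y set \<times> ('y \<Rightarrow> bool \<Rightarrow> real)"

definition bdmc :: "'y chan \<Rightarrow> bool" where
  "bdmc C \<longleftrightarrow> finite (fst C) \<and> (\<forall>y\<in>fst C. \<forall>x. snd C y x \<ge> 0)
     \<and> (\<forall>x. (\<Sum>y\<in>fst C. snd C y x) = 1)"

definition mutinf :: "'y chan \<Rightarrow> real" where
  "mutinf C = (\<Sum>y\<in>fst C. \<Sum>x\<in>(UNIV::bool set).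
      1/2 * snd C y x * log 2 (snd C y x / (1/2 * snd C y False + 1/2 * snd C y True)))"

definition lift :: "'y chan \<Rightarrow> 'y outp chan" where
  "lift C = (Base ` fst C, \<lambda>y x. case y of Base a \<Rightarrow> snd C a x | _ \<Rightarrow> 0)"

definition bminus :: "'y outp chan \<Rightarrow> 'y outp chan \<Rightarrow> 'y outp chan" where
  "bminus C1 C2 = ((\<lambda>(a,b). Two a b) ` (fst C1 \<times> fst C2),
     \<lambda>y x1. case y of Two a b \<Rightarrow> (\<Sum>x2\<in>(UNIV::bool set). 1/2 * snd C1 a (x1 \<noteq> x2) * snd C2 b x2)
                   | _ \<Rightarrow> 0)"

definition bplus :: "'y outp chan \<Rightarrow> 'y outp chan \<Rightarrow> 'y outp chan" where
  "bplus C1 C2 = ((\<lambda>(a,b,u). Three a b u) ` (fst C1 \<times> fst C2 \<times> (UNIV::bool set)),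
     \<lambda>y x2. case y of Three a b x1 \<Rightarrow> 1/2 * snd C1 a (x1 \<noteq> x2) * snd C2 b x2
                   | _ \<Rightarrow> 0)"

datatype sym = Plus | Minus | Star

text \<open>N m n for n \<ge> 0; indices n - m \<le> 0 are truncated to 0, where N = 1 as in the paper.
  The "max m 1" only matters for m = 0 (excluded by the theorem) and ensures termination.\<close>
fun Nn :: "nat \<Rightarrow> nat \<Rightarrow> nat" where
  "Nn m 0 = 1"
| "Nn m (Suc k) = Nn m k + Nn m (Suc k - max m 1)"

fun svec :: "nat \<Rightarrow> nat \<Rightarrow> nat \<Rightarrow> sym list" where
  "svec m 0 i = []"
| "svec m (Suc k) i =
     (if i \<le> Nn m (Suc k - m) then svec m k i @ [Plus]
      else if i \<le> Nn m k then svec m k i @ [Star]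
      else svec m k (i - Nn m k) @ [Minus])"

definition Sset :: "nat \<Rightarrow> nat \<Rightarrow> sym list set" where
  "Sset m n = svec m n ` {1..Nn m n}"

function Wch :: "nat \<Rightarrow> 'y chan \<Rightarrow> sym list \<Rightarrow> 'y outp chan" where
  "Wch m W t = (if t = [] then lift W else
     (case last t of
        Plus \<Rightarrow> bplus (Wch m W (take (length t - max m 1) t)) (Wch m W (butlast t))
      | Minus \<Rightarrow> bminus (Wch m W (take (length t - max m 1) t)) (Wch m W (butlast t))
      | Star \<Rightarrow> Wch m W (butlast t)))"
  by pat_completeness auto
termination
  by (relation "measure (\<lambda>(m,W,t). length t)") auto

end

theory Submission
  imports Defs
begin

text \<open>The key fact is the chain rule I(V' \<boxplus> V'') + I(V' \<boxminus> V'') = I(V') + I(V'').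
  With \<phi>(t) = t log t, an output letter with likelihoods v0, v1 contributes
  (\<phi>(v0) + \<phi>(v1))/2 - \<phi>((v0 + v1)/2) to I; the outputs of \<boxplus> and \<boxminus> have products of
  likelihoods of V' and V'' as likelihoods, so the chain rule reduces to \<phi>(ab) = a\<phi>(b) + b\<phi>(a).
  In the enumeration of S_n, the strings (t,+) and (t,-) pair up over the first N(n-m) strings t
  of S_(n-1), and such a pair contributes I(W_t'') + I(W_t), while (t,\<star>) contributes I(W_t).\<close>

definition xlog2x :: "real \<Rightarrow> real" where
  "xlog2x t = t * log 2 t"

lemma xlog2x_0 [simp]: "xlog2x 0 = 0"
  by (simp add: xlog2x_def)

lemma xlog2x_mult: "xlog2x (a * b) = a * xlog2x b + b * xlog2x a"
  by (cases "a = 0 \<or> b = 0") (auto simp: xlog2x_def log_mult algebra_simps)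

lemma xlog2x_half: "xlog2x (t / 2) = xlog2x t / 2 - t / 2"
  by (cases "t = 0") (auto simp: xlog2x_def log_divide algebra_simps)

definition letter_info :: "(bool \<Rightarrow> real) \<Rightarrow> real" where
  "letter_info v = (\<Sum>x\<in>UNIV. 1/2 * v x * log 2 (v x / (1/2 * v False + 1/2 * v True)))"

lemma mutinf_eq_sum_letter_info: "mutinf C = (\<Sum>y\<in>fst C. letter_info (snd C y))"
  by (simp add: mutinf_def letter_info_def)

lemma letter_info_eq_xlog2x:
  assumes "\<And>x. v x \<ge> 0"
  shows "letter_info v = (xlog2x (v False) + xlog2x (v True)) / 2 - xlog2x ((v False + v True) / 2)"
proof -
  define q where "q = (v False + v True) / 2"
  have summand: "1/2 * v x * log 2 (v x / (1/2 * v False + 1/2 * v True)) = (xlog2x (v x) - v x * log 2 q) / 2" for x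
  proof (cases "v x = 0")
    case False
    then have "q > 0" using assms[of False] assms[of True] by (cases x) (auto simp: q_def)
    then show ?thesis using False by (simp add: xlog2x_def log_divide q_def algebra_simps add_divide_distrib)
  qed simp
  show ?thesis
    unfolding letter_info_def summand by (simp add: UNIV_bool xlog2x_def q_def field_simps)
qed

lemma letter_info_polarization:
  fixes v w :: "bool \<Rightarrow> real"
  assumes v: "\<And>x. v x \<ge> 0" and w: "\<And>x. w x \<ge> 0"
  shows "(\<Sum>u\<in>UNIV. letter_info (\<lambda>x. 1/2 * v (u \<noteq> x) * w x))
         + letter_info (\<lambda>u. \<Sum>x\<in>UNIV. 1/2 * v (u \<noteq> x) * w x)
       = (w False + w True) / 2 * letter_info v + (v False + v True) / 2 * letter_info w"
proof -
  have nn: "\<And>u x. 1/2 * v (u \<noteq> x) * w x \<ge> 0" "\<And>u. (\<Sum>x\<in>UNIV. 1/2 * v (u \<noteq> x) * w x) \<ge> 0"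
    using v w by (auto intro: sum_nonneg)
  have total_mass: "xlog2x ((p*r/2 + p'*r'/2 + (p'*r/2 + p*r'/2)) / 2)
      = (p + p')/2 * xlog2x ((r + r')/2) + (r + r')/2 * xlog2x ((p + p')/2)" for p p' r r' :: real
  proof -
    have "(p*r/2 + p'*r'/2 + (p'*r/2 + p*r'/2)) / 2 = (p + p')/2 * ((r + r')/2)"
      by (simp add: field_simps)
    then show ?thesis by (metis xlog2x_mult)
  qed
  show ?thesis
    by (simp add: letter_info_eq_xlog2x nn v w UNIV_bool total_mass,
        simp add: xlog2x_half, simp add: xlog2x_mult field_simps)
qed

lemma sum_bplus_outputs:
  "(\<Sum>y\<in>fst (bplus C1 C2). f y) = (\<Sum>a\<in>fst C1. \<Sum>b\<in>fst C2. \<Sum>u\<in>UNIV. f (Three a b u))"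
proof -
  have "inj_on (\<lambda>(a, b, u). Three a b u) (fst C1 \<times> fst C2 \<times> UNIV)"
    by (auto simp: inj_on_def)
  then show ?thesis
    by (simp add: bplus_def sum.reindex sum.cartesian_product split_def)
qed

lemma sum_bminus_outputs:
  "(\<Sum>y\<in>fst (bminus C1 C2). f y) = (\<Sum>a\<in>fst C1. \<Sum>b\<in>fst C2. f (Two a b))"
proof -
  have "inj_on (\<lambda>(a, b). Two a b) (fst C1 \<times> fst C2)"
    by (auto simp: inj_on_def)
  then show ?thesis
    by (simp add: bminus_def sum.reindex sum.cartesian_product split_def)
qed

lemma snd_bplus_Three:
  "snd (bplus C1 C2) (Three a b u) = (\<lambda>x. 1/2 * snd C1 a (u \<noteq> x) * snd C2 b x)"
  by (simp add: bplus_def)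

lemma snd_bminus_Two:
  "snd (bminus C1 C2) (Two a b) = (\<lambda>x. \<Sum>x'\<in>UNIV. 1/2 * snd C1 a (x \<noteq> x') * snd C2 b x')"
  by (simp add: bminus_def)

lemma bdmc_output_mass:
  assumes "bdmc C"
  shows "(\<Sum>y\<in>fst C. (snd C y False + snd C y True) / 2) = 1"
  using assms by (simp add: bdmc_def sum.distrib flip: sum_divide_distrib)

lemma bdmc_bplus:
  assumes C1: "bdmc C1" and C2: "bdmc C2"
  shows "bdmc (bplus C1 C2)"
proof -
  have "(\<Sum>y\<in>fst (bplus C1 C2). snd (bplus C1 C2) y x) = 1" for x
  proof -
    have "(\<Sum>y\<in>fst (bplus C1 C2). snd (bplus C1 C2) y x)
        = (\<Sum>a\<in>fst C1. \<Sum>u\<in>UNIV. 1/2 * snd C1 a (u \<noteq> x) * (\<Sum>b\<in>fst C2. snd C2 b x))"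
      by (simp add: sum_bplus_outputs snd_bplus_Three sum_distrib_left sum.swap[of _ "fst C2"] mult.assoc)
    also have "\<dots> = (\<Sum>a\<in>fst C1. (snd C1 a False + snd C1 a True) / 2)"
      using C2 by (cases x) (simp_all add: bdmc_def UNIV_bool add_divide_distrib add.commute)
    finally show ?thesis using bdmc_output_mass[OF C1] by simp
  qed
  then show ?thesis
    using C1 C2 by (auto simp: bdmc_def bplus_def)
qed

lemma bdmc_bminus:
  assumes C1: "bdmc C1" and C2: "bdmc C2"
  shows "bdmc (bminus C1 C2)"
proof -
  have "(\<Sum>y\<in>fst (bminus C1 C2). snd (bminus C1 C2) y x) = 1" for x
  proof -
    have "(\<Sum>y\<in>fst (bminus C1 C2). snd (bminus C1 C2) y x)
        = (\<Sum>a\<in>fst C1. \<Sum>x'\<in>UNIV. 1/2 * snd C1 a (x \<noteq> x') * (\<Sum>b\<in>fst C2. snd C2 b x'))"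
      by (simp add: sum_bminus_outputs snd_bminus_Two sum_distrib_left sum.swap[of _ "fst C2"] mult.assoc)
    also have "\<dots> = (\<Sum>a\<in>fst C1. (snd C1 a False + snd C1 a True) / 2)"
      using C2 by (cases x) (simp_all add: bdmc_def UNIV_bool add_divide_distrib add.commute)
    finally show ?thesis using bdmc_output_mass[OF C1] by simp
  qed
  moreover have "snd (bminus C1 C2) y x \<ge> 0" if "y \<in> fst (bminus C1 C2)" for y x
    using that C1 C2 by (auto simp: bdmc_def bminus_def intro!: sum_nonneg)
  ultimately show ?thesis
    using C1 C2 by (auto simp: bdmc_def bminus_def)
qed

lemma mutinf_bplus_add_bminus:
  assumes C1: "bdmc C1" and C2: "bdmc C2"
  shows "mutinf (bplus C1 C2) + mutinf (bminus C1 C2) = mutinf C1 + mutinf C2"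
proof -
  let ?v = "snd C1" and ?w = "snd C2"
  have polarization: "(\<Sum>u\<in>UNIV. letter_info (snd (bplus C1 C2) (Three a b u)))
        + letter_info (snd (bminus C1 C2) (Two a b))
      = (?w b False + ?w b True) / 2 * letter_info (?v a) + (?v a False + ?v a True) / 2 * letter_info (?w b)"
    if "a \<in> fst C1" "b \<in> fst C2" for a b
    unfolding snd_bplus_Three snd_bminus_Two
    using that C1 C2 by (intro letter_info_polarization) (auto simp: bdmc_def)
  have "mutinf (bplus C1 C2) + mutinf (bminus C1 C2)
      = (\<Sum>a\<in>fst C1. \<Sum>b\<in>fst C2. (?w b False + ?w b True) / 2 * letter_info (?v a)
                                   + (?v a False + ?v a True) / 2 * letter_info (?w b))"
    unfolding mutinf_eq_sum_letter_info sum_bplus_outputs sum_bminus_outputs sum.distrib[symmetric]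
    by (intro sum.cong refl) (simp add: polarization)
  also have "\<dots> = (\<Sum>b\<in>fst C2. (?w b False + ?w b True) / 2) * mutinf C1
                  + (\<Sum>a\<in>fst C1. (?v a False + ?v a True) / 2) * mutinf C2"
    by (simp add: mutinf_eq_sum_letter_info sum.distrib sum_distrib_left sum_distrib_right
        sum.swap[of _ "fst C2"])
  also have "\<dots> = mutinf C1 + mutinf C2"
    using C1 C2 by (simp add: bdmc_output_mass)
  finally show ?thesis .
qed

lemma Nn_pos: "Nn m k > 0"
  by (induction k) auto

lemma Nn_mono: "k \<le> l \<Longrightarrow> Nn m k \<le> Nn m l"
  by (induction l) (auto simp: le_Suc_eq intro: le_trans)

lemma Nn_Suc: "m \<ge> 1 \<Longrightarrow> Nn m (Suc k) = Nn m k + Nn m (Suc k - m)"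
  by (simp add: max_def)

lemma length_svec [simp]: "length (svec m k i) = k"
  by (induction k arbitrary: i) auto

lemma take_svec:
  assumes "m \<ge> 1" "l \<le> k" "i \<le> Nn m l"
  shows "take l (svec m k i) = svec m l i"
  using assms(2)
proof (induction k)
  case (Suc k)
  show ?case
  proof (cases "l = Suc k")
    case False
    with Suc.prems have "l \<le> k" by simp
    moreover from this have "i \<le> Nn m k" using assms(3) Nn_mono order_trans by blast
    ultimately show ?thesis using Suc.IH assms(1) by auto
  qed simp
qed simp

lemma inj_on_svec: "m \<ge> 1 \<Longrightarrow> inj_on (svec m k) {1..Nn m k}"
proof (induction k)
  case (Suc k)
  have M_le_N: "Nn m (Suc k - m) \<le> Nn m k" by (rule Nn_mono) (use Suc.prems in simp)
  show ?case
  proof (rule inj_onI)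
    fix i j assume "i \<in> {1..Nn m (Suc k)}" "j \<in> {1..Nn m (Suc k)}" "svec m (Suc k) i = svec m (Suc k) j"
    with Suc M_le_N show "i = j"
      by (auto simp: Nn_Suc split: if_splits dest!: inj_onD[of "svec m k"])
  qed
qed simp

lemma sum_Sset:
  assumes "m \<ge> 1"
  shows "(\<Sum>s\<in>Sset m n. g s) = (\<Sum>i=1..Nn m n. g (svec m n i))"
  unfolding Sset_def using sum.reindex[OF inj_on_svec[OF assms]] by simp

lemma sum_atLeastAtMost_split:
  fixes f :: "nat \<Rightarrow> 'a::comm_monoid_add"
  assumes "l \<le> Suc m" "m \<le> n"
  shows "(\<Sum>i=l..n. f i) = (\<Sum>i=l..m. f i) + (\<Sum>i=Suc m..n. f i)"
proof -
  obtain d where "n = m + d" using assms(2) le_Suc_ex by blast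
  then show ?thesis using sum.ub_add_nat[of l m f d] assms(1) by simp
qed

lemma sum_Sset_Suc:
  fixes g :: "sym list \<Rightarrow> 'a::comm_monoid_add"
  assumes m: "m \<ge> 1"
    and Star: "\<And>s. g (s @ [Star]) = g s"
    and Plus_Minus: "\<And>s. g (s @ [Plus]) + g (s @ [Minus]) = g (take (Suc (length s) - m) s) + g s"
  shows "(\<Sum>s\<in>Sset m (Suc k). g s) = (\<Sum>s\<in>Sset m k. g s) + (\<Sum>s\<in>Sset m (Suc k - m). g s)"
proof -
  define N where "N = Nn m k"
  define M where "M = Nn m (Suc k - m)"
  have M_le_N: "M \<le> N"
    using m by (auto simp: M_def N_def intro: Nn_mono)
  let ?s = "svec m k" and ?s' = "svec m (Suc k)"
  \<comment> \<open>Indices 1..M of ?s' end in Plus, M+1..N in Star, and the Minus twin of i \<le> M is i + N.\<close>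
  have Sset_k: "(\<Sum>s\<in>Sset m k. g s) = (\<Sum>i=1..M. g (?s i)) + (\<Sum>i=Suc M..N. g (?s i))"
    unfolding sum_Sset[OF m] N_def[symmetric] using M_le_N by (intro sum_atLeastAtMost_split) auto
  have "(\<Sum>s\<in>Sset m (Suc k). g s) = (\<Sum>i=1..N. g (?s' i)) + (\<Sum>i=1..M. g (?s' (i + N)))"
    unfolding sum_Sset[OF m] Nn_Suc[OF m] N_def[symmetric] M_def[symmetric]
    using sum.ub_add_nat[of 1 N "\<lambda>i. g (?s' i)" M] sum.shift_bounds_cl_nat_ivl[of "\<lambda>i. g (?s' i)" 1 N M]
    by (simp del: svec.simps add: add.commute)
  also have "\<dots> = (\<Sum>i=1..M. g (?s' i)) + (\<Sum>i=Suc M..N. g (?s' i)) + (\<Sum>i=1..M. g (?s' (i + N)))"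
    using M_le_N by (subst sum_atLeastAtMost_split[of 1 M N]) auto
  also have "\<dots> = (\<Sum>i=1..M. g (?s i @ [Plus])) + (\<Sum>i=Suc M..N. g (?s i)) + (\<Sum>i=1..M. g (?s i @ [Minus]))"
    using Star M_le_N by (intro arg_cong2[where f = "(+)"] sum.cong) (auto simp: M_def N_def)
  also have "\<dots> = (\<Sum>i=1..M. g (?s i @ [Plus]) + g (?s i @ [Minus])) + (\<Sum>i=Suc M..N. g (?s i))"
    by (simp add: sum.distrib add_ac)
  also have "\<dots> = (\<Sum>i=1..M. g (svec m (Suc k - m) i) + g (?s i)) + (\<Sum>i=Suc M..N. g (?s i))"
    using m by (simp add: Plus_Minus take_svec M_def cong: sum.cong_simp)
  also have "\<dots> = (\<Sum>i=1..M. g (svec m (Suc k - m) i)) + (\<Sum>s\<in>Sset m k. g s)"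
    by (simp add: sum.distrib Sset_k add_ac)
  also have "(\<Sum>i=1..M. g (svec m (Suc k - m) i)) = (\<Sum>s\<in>Sset m (Suc k - m). g s)"
    by (simp add: sum_Sset[OF m] M_def)
  finally show ?thesis
    by (simp add: add.commute)
qed

lemma sum_Sset_eq_Nn:
  fixes g :: "sym list \<Rightarrow> 'a::comm_semiring_1"
  assumes m: "m \<ge> 1"
    and Star: "\<And>s. g (s @ [Star]) = g s"
    and Plus_Minus: "\<And>s. g (s @ [Plus]) + g (s @ [Minus]) = g (take (Suc (length s) - m) s) + g s"
  shows "(\<Sum>s\<in>Sset m n. g s) = of_nat (Nn m n) * g []"
proof (induction n rule: less_induct)
  case (less n)
  show ?case
  proof (cases n)
    case 0
    then show ?thesis by (simp add: Sset_def)
  next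
    case (Suc k)
    with m have "k < n" "Suc k - m < n" by simp_all
    with Suc show ?thesis
      using less sum_Sset_Suc[OF m Star Plus_Minus, of k]
      by (simp del: Nn.simps add: Nn_Suc[OF m] distrib_right)
  qed
qed

declare Wch.simps [simp del]

lemma Wch_Nil: "Wch m W [] = lift W"
  by (simp add: Wch.simps)

lemma Wch_snoc:
  assumes "m \<ge> 1"
  shows "Wch m W (s @ [x]) = (case x of
      Plus \<Rightarrow> bplus (Wch m W (take (Suc (length s) - m) s)) (Wch m W s)
    | Minus \<Rightarrow> bminus (Wch m W (take (Suc (length s) - m) s)) (Wch m W s)
    | Star \<Rightarrow> Wch m W s)"
  using assms by (subst Wch.simps) (simp add: max_def split: sym.split)

lemma bdmc_lift: "bdmc W \<Longrightarrow> bdmc (lift W)"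
  unfolding bdmc_def lift_def by (auto simp: sum.reindex inj_on_def)

lemma mutinf_lift: "mutinf (lift W) = mutinf W"
  unfolding mutinf_def lift_def by (simp add: sum.reindex inj_on_def)

lemma bdmc_Wch:
  assumes "m \<ge> 1" "bdmc W"
  shows "bdmc (Wch m W t)"
proof (induction t rule: length_induct)
  case (1 t)
  show ?case
  proof (cases t rule: rev_cases)
    case Nil
    then show ?thesis using assms(2) by (simp add: Wch_Nil bdmc_lift)
  next
    case (snoc s x)
    then show ?thesis
      using 1 assms(1) by (auto simp: Wch_snoc split: sym.split intro!: bdmc_bplus bdmc_bminus)
  qed
qed

theorem mainTheorem11:
  fixes m n :: nat and W :: "'y chan"
  assumes "m \<ge> 1" and "bdmc W" and "n \<ge> 1"
  shows "(\<Sum>s\<in>Sset m n. mutinf (Wch m W s))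
           = (\<Sum>s\<in>Sset m (n - 1). mutinf (Wch m W s)) + (\<Sum>s\<in>Sset m (n - m). mutinf (Wch m W s))
       \<and> (\<Sum>s\<in>Sset m n. mutinf (Wch m W s)) / real (Nn m n) = mutinf W"
proof -
  obtain k where n: "n = Suc k"
    using assms(3) by (cases n) auto
  let ?I = "\<lambda>s. mutinf (Wch m W s)"
  have Star: "?I (s @ [Star]) = ?I s" for s
    using assms(1) by (simp add: Wch_snoc)
  have Plus_Minus: "?I (s @ [Plus]) + ?I (s @ [Minus]) = ?I (take (Suc (length s) - m) s) + ?I s" for s
    using assms(1,2) by (simp add: Wch_snoc mutinf_bplus_add_bminus bdmc_Wch)
  have "(\<Sum>s\<in>Sset m n. ?I s) = (\<Sum>s\<in>Sset m (n - 1). ?I s) + (\<Sum>s\<in>Sset m (n - m). ?I s)"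
    using sum_Sset_Suc[OF assms(1) Star Plus_Minus] n by simp
  moreover have "(\<Sum>s\<in>Sset m n. ?I s) = real (Nn m n) * mutinf W"
    using sum_Sset_eq_Nn[OF assms(1) Star Plus_Minus] by (simp add: Wch_Nil mutinf_lift)
  then have "(\<Sum>s\<in>Sset m n. ?I s) / real (Nn m n) = mutinf W"
    using Nn_pos[of m n] by simp
  ultimately show ?thesis
    by blast
qed

end
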